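(* Let $p$ be a prime and let $\lambda_1\ge\lambda_2\ge\cdots$ and $\nu_1\ge\nu_2\ge\cdots$ be finitely supported sequences of nonnegative integers with $\nu_i\le\lambda_i$ for all $i$. Then $$\prod_{i\ge1}p^{\nu_i(\lambda_i-\nu_i)}\ \le\ \prod_{i\ge1}p^{\nu_{i+1}(\lambda_i-\nu_i)}\begin{bmatrix}\lambda_i-\nu_{i+1}\\ \nu_i-\nu_{i+1}\end{bmatrix}_p\ \le\ p^{\nu_1}\prod_{i\ge1}p^{\nu_i(\lambda_i-\nu_i)}.$$
   Context: $\begin{bmatrix}\lambda\\ \nu\end{bmatrix}_p$ denotes the $p$-binomial coefficient, i.e. the number of $\nu$-dimensional subspaces of a $\lambda$-dimensional vector space over $\mathbb Z/p\mathbb Z$. *)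

theory Defs
  imports Main "HOL-Computational_Algebra.Primes"
begin

text \<open>The vector space (Z/pZ)^n, realised as functions nat => nat with
  entries in {0..<p} and support in {0..<n}; operations are taken mod p.\<close>

definition Fvecs :: "nat \<Rightarrow> nat \<Rightarrow> (nat \<Rightarrow> nat) set" where
  "Fvecs p n = {v. (\<forall>i. v i < p) \<and> (\<forall>i\<ge>n. v i = 0)}"

definition vadd :: "nat \<Rightarrow> (nat \<Rightarrow> nat) \<Rightarrow> (nat \<Rightarrow> nat) \<Rightarrow> (nat \<Rightarrow> nat)" where
  "vadd p u v = (\<lambda>i. (u i + v i) mod p)"

definition vsmult :: "nat \<Rightarrow> nat \<Rightarrow> (nat \<Rightarrow> nat) \<Rightarrow> (nat \<Rightarrow> nat)" where
  "vsmult p c v = (\<lambda>i. (c * v i) mod p)"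

definition lincomb :: "nat \<Rightarrow> (nat \<Rightarrow> nat) \<Rightarrow> (nat \<Rightarrow> nat \<Rightarrow> nat) \<Rightarrow> nat \<Rightarrow> (nat \<Rightarrow> nat)" where
  "lincomb p c b k = (\<lambda>i. (\<Sum>j<k. c j * b j i) mod p)"

definition is_subspace :: "nat \<Rightarrow> nat \<Rightarrow> (nat \<Rightarrow> nat) set \<Rightarrow> bool" where
  "is_subspace p n W \<longleftrightarrow> W \<subseteq> Fvecs p n \<and> (\<lambda>_. 0) \<in> W \<and>
     (\<forall>u\<in>W. \<forall>v\<in>W. vadd p u v \<in> W) \<and> (\<forall>c<p. \<forall>v\<in>W. vsmult p c v \<in> W)"

definition has_dim :: "nat \<Rightarrow> (nat \<Rightarrow> nat) set \<Rightarrow> nat \<Rightarrow> bool" where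
  "has_dim p W k \<longleftrightarrow> (\<exists>b. (\<forall>j<k. b j \<in> W) \<and>
     W = {lincomb p c b k | c. \<forall>j<k. c j < p} \<and>
     (\<forall>c. (\<forall>j<k. c j < p) \<longrightarrow> lincomb p c b k = (\<lambda>_. 0) \<longrightarrow> (\<forall>j<k. c j = 0)))"

definition pbinom :: "nat \<Rightarrow> nat \<Rightarrow> nat \<Rightarrow> nat" where
  "pbinom p n k = card {W. is_subspace p n W \<and> has_dim p W k}"

end

(*
  Both inequalities hold factor by factor, by the bounds
  p^(k(n-k)) <= [n k]_p <= p^(k(n-k)+k) for k <= n, taken with n = lam_i - nu_(i+1) and
  k = nu_i - nu_(i+1); the surplus exponents nu_i - nu_(i+1) telescope to at most nu_1.
  For the lower bound, M |-> row space of [I_k | M] embeds the k x (n-k) matrices over Z/pZ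
  into the k-dimensional subspaces of (Z/pZ)^n.  For the upper bound, a k-dimensional
  subspace W has p^k elements and at least p^((k-1)k) ordered bases, since at each step
  p^k - p^j >= p^(k-1) vectors of W lie outside the span of the j vectors chosen so far;
  distinct subspaces have disjoint sets of ordered bases, and there are only p^(nk)
  k-tuples of vectors in (Z/pZ)^n.
*)
theory Submission
  imports Defs "HOL-Number_Theory.Cong"
begin

definition padded_funcs :: "nat \<Rightarrow> 'a set \<Rightarrow> 'a \<Rightarrow> (nat \<Rightarrow> 'a) set" where
  "padded_funcs k A d = {f. (\<forall>i<k. f i \<in> A) \<and> (\<forall>i\<ge>k. f i = d)}"

lemma padded_funcs_0: "padded_funcs 0 A d = {\<lambda>_. d}"
  unfolding padded_funcs_def by auto

lemma padded_funcs_Suc: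
  "padded_funcs (Suc k) A d = (\<lambda>(a, f). f(k := a)) ` (A \<times> padded_funcs k A d)"
proof
  show "padded_funcs (Suc k) A d \<subseteq> (\<lambda>(a, f). f(k := a)) ` (A \<times> padded_funcs k A d)"
  proof
    fix f assume "f \<in> padded_funcs (Suc k) A d"
    then have "(f k, f(k := d)) \<in> A \<times> padded_funcs k A d"
      unfolding padded_funcs_def by auto
    moreover have "f = (\<lambda>(a, g). g(k := a)) (f k, f(k := d))" by auto
    ultimately show "f \<in> (\<lambda>(a, f). f(k := a)) ` (A \<times> padded_funcs k A d)" by blast
  qed
qed (auto simp: padded_funcs_def)

lemma inj_on_padded_funcs_Suc: "inj_on (\<lambda>(a, f). f(k := a)) (A \<times> padded_funcs k A d)"
proof (rule inj_onI, clarify)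
  fix a f b g
  assume f: "f \<in> padded_funcs k A d" and g: "g \<in> padded_funcs k A d"
    and eq: "f(k := a) = g(k := b)"
  have "f i = g i" for i
  proof (cases "i = k")
    case True
    then show ?thesis
      using f g by (simp add: padded_funcs_def)
  next
    case False
    then show ?thesis
      using fun_cong[OF eq, of i] by simp
  qed
  then show "a = b \<and> f = g"
    using fun_cong[OF eq, of k] by auto
qed

lemma finite_padded_funcs: "finite A \<Longrightarrow> finite (padded_funcs k A d)"
  by (induction k) (simp_all add: padded_funcs_0 padded_funcs_Suc)

lemma card_padded_funcs: "finite A \<Longrightarrow> card (padded_funcs k A d) = card A ^ k"
  by (induction k)
    (simp_all add: padded_funcs_0 padded_funcs_Suc card_image[OF inj_on_padded_funcs_Suc]
      card_cartesian_product finite_padded_funcs)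

lemma Fvecs_eq_padded_funcs: "p > 0 \<Longrightarrow> Fvecs p n = padded_funcs n {0..<p} 0"
  unfolding Fvecs_def padded_funcs_def by (auto, metis linorder_not_le)

lemma finite_Fvecs: "p > 0 \<Longrightarrow> finite (Fvecs p n)"
  by (simp add: Fvecs_eq_padded_funcs finite_padded_funcs)

lemma card_Fvecs: "p > 0 \<Longrightarrow> card (Fvecs p n) = p ^ n"
  by (simp add: Fvecs_eq_padded_funcs card_padded_funcs)

lemma finite_subspace: "p > 0 \<Longrightarrow> is_subspace p n W \<Longrightarrow> finite W"
  unfolding is_subspace_def using finite_Fvecs finite_subset by blast

lemma finite_subspaces: "p > 0 \<Longrightarrow> finite {W. is_subspace p n W \<and> has_dim p W k}"
  by (rule finite_subset[of _ "Pow (Fvecs p n)"]) (auto simp: is_subspace_def finite_Fvecs)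

section \<open>Linear combinations modulo p\<close>

lemma lincomb_cong_mod:
  assumes "\<And>j. j < k \<Longrightarrow> [c j = d j] (mod p)"
  shows "lincomb p c b k = lincomb p d b k"
proof
  fix i
  have "[(\<Sum>j<k. c j * b j i) = (\<Sum>j<k. d j * b j i)] (mod p)"
    by (intro cong_sum cong_mult cong_refl) (simp add: assms)
  then show "lincomb p c b k i = lincomb p d b k i"
    unfolding lincomb_def cong_def .
qed

lemma lincomb_in_Fvecs:
  "p > 0 \<Longrightarrow> (\<And>j. j < k \<Longrightarrow> b j \<in> Fvecs p n) \<Longrightarrow> lincomb p c b k \<in> Fvecs p n"
  unfolding Fvecs_def lincomb_def by auto

lemma lincomb_zero: "lincomb p (\<lambda>_. 0) b k = (\<lambda>_. 0)"
  unfolding lincomb_def by simp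

lemma vadd_lincomb: "vadd p (lincomb p c b k) (lincomb p d b k) = lincomb p (\<lambda>j. c j + d j) b k"
  unfolding vadd_def lincomb_def by (simp add: mod_add_eq algebra_simps sum.distrib)

lemma vsmult_lincomb: "vsmult p a (lincomb p c b k) = lincomb p (\<lambda>j. a * c j) b k"
  unfolding vsmult_def lincomb_def by (simp add: mod_mult_right_eq sum_distrib_left mult.assoc)

lemma lincomb_Suc:
  "lincomb p c b (Suc k) = vadd p (lincomb p c b k) (vsmult p (c k mod p) (b k))"
  unfolding vadd_def vsmult_def lincomb_def by (simp add: mod_add_eq mod_mult_left_eq)

lemma lincomb_unit:
  assumes "j < k" "\<And>l. l < k \<Longrightarrow> b l \<in> Fvecs p n"
  shows "lincomb p (\<lambda>l. if l = j then 1 else 0) b k = b j"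
proof
  fix i
  have "(\<Sum>l<k. (if l = j then 1 else 0) * b l i) = (\<Sum>l<k. if l = j then b l i else 0)"
    by (rule sum.cong) auto
  also have "\<dots> = b j i"
    using assms(1) by simp
  finally have "(\<Sum>l<k. (if l = j then 1 else 0) * b l i) = b j i" .
  then show "lincomb p (\<lambda>l. if l = j then 1 else 0) b k i = b j i"
    using assms unfolding lincomb_def Fvecs_def by auto
qed

definition lspan :: "nat \<Rightarrow> (nat \<Rightarrow> nat \<Rightarrow> nat) \<Rightarrow> nat \<Rightarrow> (nat \<Rightarrow> nat) set" where
  "lspan p b k = {lincomb p c b k | c. \<forall>j<k. c j < p}"

definition lin_indep :: "nat \<Rightarrow> (nat \<Rightarrow> nat \<Rightarrow> nat) \<Rightarrow> nat \<Rightarrow> bool" where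
  "lin_indep p b k \<longleftrightarrow>
     (\<forall>c. (\<forall>j<k. c j < p) \<longrightarrow> lincomb p c b k = (\<lambda>_. 0) \<longrightarrow> (\<forall>j<k. c j = 0))"

lemma has_dim_iff:
  "has_dim p W k \<longleftrightarrow> (\<exists>b. (\<forall>j<k. b j \<in> W) \<and> W = lspan p b k \<and> lin_indep p b k)"
  unfolding has_dim_def lspan_def lin_indep_def by blast

lemma lincomb_in_lspan:
  assumes "p > 0"
  shows "lincomb p c b k \<in> lspan p b k"
proof -
  have "lincomb p c b k = lincomb p (\<lambda>j. c j mod p) b k"
    by (rule lincomb_cong_mod) (simp add: cong_def)
  then show ?thesis
    unfolding lspan_def using assms by auto
qed

lemma lspan_eq_image:
  assumes "p > 0"
  shows "lspan p b k = (\<lambda>c. lincomb p c b k) ` Fvecs p k"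
proof
  show "lspan p b k \<subseteq> (\<lambda>c. lincomb p c b k) ` Fvecs p k"
  proof
    fix v assume "v \<in> lspan p b k"
    then obtain c where c: "\<forall>j<k. c j < p" and v: "v = lincomb p c b k"
      unfolding lspan_def by auto
    define c' where "c' j = (if j < k then c j else 0)" for j
    have "v = lincomb p c' b k"
      unfolding v by (rule lincomb_cong_mod) (simp add: c'_def)
    moreover have "c' \<in> Fvecs p k"
      unfolding Fvecs_def c'_def using c assms by auto
    ultimately show "v \<in> (\<lambda>c. lincomb p c b k) ` Fvecs p k" by blast
  qed
qed (auto simp: lspan_def Fvecs_def)

lemma unit_in_lspan:
  "p > 1 \<Longrightarrow> j < k \<Longrightarrow> (\<And>l. l < k \<Longrightarrow> b l \<in> Fvecs p n) \<Longrightarrow> b j \<in> lspan p b k"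
  using lincomb_in_lspan[of p "\<lambda>l. if l = j then 1 else 0" b k] lincomb_unit[of j k b p n] by simp

lemma is_subspace_lspan:
  assumes "p > 0" "\<And>j. j < k \<Longrightarrow> b j \<in> Fvecs p n"
  shows "is_subspace p n (lspan p b k)"
  unfolding is_subspace_def
proof (intro conjI ballI allI impI)
  show "lspan p b k \<subseteq> Fvecs p n"
    using lincomb_in_Fvecs[OF assms] by (auto simp: lspan_def)
  show "(\<lambda>_. 0) \<in> lspan p b k"
    using lincomb_in_lspan[OF assms(1)] lincomb_zero by metis
next
  fix u v assume "u \<in> lspan p b k" "v \<in> lspan p b k"
  then show "vadd p u v \<in> lspan p b k"
    using lincomb_in_lspan[OF assms(1)] by (auto simp: lspan_def vadd_lincomb)
next
  fix a v assume "v \<in> lspan p b k"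
  then show "vsmult p a v \<in> lspan p b k"
    using lincomb_in_lspan[OF assms(1)] by (auto simp: lspan_def vsmult_lincomb)
qed

lemma eq_if_cong_add_complement:
  fixes c d p :: nat
  assumes "c < p" "d < p" "[c + (p - d) = 0] (mod p)"
  shows "c = d"
proof -
  have "[c + (p - d) + d = 0 + d] (mod p)"
    using assms(3) by (rule cong_add) (rule cong_refl)
  moreover have "c + (p - d) + d = c + p * 1"
    using assms(2) by simp
  ultimately have "[c = d] (mod p)"
    by (simp add: cong_def)
  then show ?thesis
    using assms(1,2) by (simp add: cong_def)
qed

lemma inj_on_lincomb:
  assumes "p > 0" "lin_indep p b k"
  shows "inj_on (\<lambda>c. lincomb p c b k) (Fvecs p k)"
proof (rule inj_onI)
  fix c d assume c: "c \<in> Fvecs p k" and d: "d \<in> Fvecs p k"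
    and eq: "lincomb p c b k = lincomb p d b k"
  \<comment> \<open>c j + (p - d j) stands for c j - d j modulo p, avoiding truncated subtraction\<close>
  define e where "e j = (c j + (p - d j)) mod p" for j
  have "lincomb p e b k = lincomb p (\<lambda>j. c j + (p - d j)) b k"
    by (rule lincomb_cong_mod) (simp add: e_def cong_def)
  also have "\<dots> = vadd p (lincomb p d b k) (lincomb p (\<lambda>j. p - d j) b k)"
    unfolding eq[symmetric] by (rule vadd_lincomb[symmetric])
  also have "\<dots> = lincomb p (\<lambda>j. d j + (p - d j)) b k"
    by (rule vadd_lincomb)
  also have "\<dots> = lincomb p (\<lambda>_. 0) b k"
    using d by (intro lincomb_cong_mod) (simp add: Fvecs_def cong_def less_imp_le)
  finally have "lincomb p e b k = (\<lambda>_. 0)"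
    by (simp only: lincomb_zero)
  moreover have "\<forall>j<k. e j < p"
    using assms(1) by (simp add: e_def)
  ultimately have compl: "\<forall>j<k. e j = 0"
    using assms(2)[unfolded lin_indep_def, rule_format, of e] by simp
  show "c = d"
  proof
    fix j
    show "c j = d j"
    proof (cases "j < k")
      case True
      have "c j < p" "d j < p"
        using c d by (simp_all add: Fvecs_def)
      moreover have "[c j + (p - d j) = 0] (mod p)"
        using compl True by (simp add: e_def cong_def)
      ultimately show ?thesis
        by (rule eq_if_cong_add_complement)
    next
      case False
      then show ?thesis
        using c d by (simp add: Fvecs_def)
    qed
  qed
qed

lemma card_lspan:
  "p > 0 \<Longrightarrow> lin_indep p b k \<Longrightarrow> card (lspan p b k) = p ^ k"
  by (simp add: lspan_eq_image card_image inj_on_lincomb card_Fvecs)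

lemma card_has_dim: "p > 0 \<Longrightarrow> has_dim p W k \<Longrightarrow> card W = p ^ k"
  unfolding has_dim_iff using card_lspan by blast

lemma cong_solve_linear:
  fixes p :: nat
  assumes "p > 0" "[x + c * v = 0] (mod p)" "[c * d = 1] (mod p)"
  shows "[v = (p - 1) * d * x] (mod p)"
  \<comment> \<open>p - 1 plays the role of -1\<close>
proof -
  have "[(p - 1) * d * x + d * (x + c * v) = (p - 1) * d * x + d * 0] (mod p)"
    using assms(2) by (intro cong_add cong_mult cong_refl)
  moreover have "(p - 1) * d * x + d * (x + c * v) = p * (d * x) + (c * d) * v"
    using assms(1) by (cases p) (simp_all add: algebra_simps)
  moreover have "[p * (d * x) + (c * d) * v = 0 + 1 * v] (mod p)"
    using assms(3) by (intro cong_add cong_mult cong_refl) (simp add: cong_def)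
  ultimately show ?thesis
    by (simp add: cong_def)
qed

lemma lin_indep_fun_upd:
  assumes "prime p" "lin_indep p t j" "\<forall>i. v i < p" "v \<notin> lspan p t j"
  shows "lin_indep p (t(j := v)) (Suc j)"
  unfolding lin_indep_def
proof (rule allI, intro impI)
  fix c assume c: "\<forall>l<Suc j. c l < p" and zero: "lincomb p c (t(j := v)) (Suc j) = (\<lambda>_. 0)"
  have p0: "p > 0"
    using assms(1) prime_gt_0_nat by blast
  have rel: "[(\<Sum>l<j. c l * t l i) + c j * v i = 0] (mod p)" for i
  proof -
    have "(\<Sum>l<j. c l * (t(j := v)) l i) = (\<Sum>l<j. c l * t l i)"
      by (rule sum.cong) auto
    then show ?thesis
      using fun_cong[OF zero, of i] by (simp add: lincomb_def cong_def)
  qed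
  have "c j = 0"
  proof (rule ccontr)
    assume "c j \<noteq> 0"
    then have "\<not> p dvd c j"
      using c[rule_format, of j] by (auto dest: dvd_imp_le)
    then have "coprime (c j) p"
      using prime_imp_coprime[OF assms(1)] coprime_commute by blast
    then obtain d where d: "[c j * d = 1] (mod p)"
      using cong_solve_coprime_nat by auto
    have "v = lincomb p (\<lambda>l. (p - 1) * d * c l) t j"
    proof
      fix i
      have "[v i = (p - 1) * d * (\<Sum>l<j. c l * t l i)] (mod p)"
        using cong_solve_linear[OF p0 rel d] .
      then show "v i = lincomb p (\<lambda>l. (p - 1) * d * c l) t j i"
        using assms(3) by (simp add: lincomb_def cong_def sum_distrib_left algebra_simps)
    qed
    then show False
      using assms(4) lincomb_in_lspan[OF p0] by metis
  qed
  then have "lincomb p c t j = (\<lambda>_. 0)"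
    using rel by (simp add: lincomb_def cong_def)
  then show "\<forall>l<Suc j. c l = 0"
    using assms(2) c \<open>c j = 0\<close> unfolding lin_indep_def by (auto simp: less_Suc_eq)
qed

section \<open>Ordered bases and the upper bound\<close>

lemma lincomb_in_subspace:
  assumes "p > 0" "is_subspace p n W" "\<And>j. j < k \<Longrightarrow> b j \<in> W"
  shows "lincomb p c b k \<in> W"
  using assms(3)
proof (induction k)
  case 0
  then show ?case
    using assms(2) by (simp add: lincomb_def is_subspace_def)
next
  case (Suc k)
  then show ?case
    using assms(1,2) unfolding lincomb_Suc is_subspace_def by simp
qed

lemma lspan_subset_subspace:
  "p > 0 \<Longrightarrow> is_subspace p n W \<Longrightarrow> (\<And>j. j < k \<Longrightarrow> b j \<in> W) \<Longrightarrow> lspan p b k \<subseteq> W"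
  unfolding lspan_def using lincomb_in_subspace by blast

definition indep_tuples :: "nat \<Rightarrow> (nat \<Rightarrow> nat) set \<Rightarrow> nat \<Rightarrow> (nat \<Rightarrow> nat \<Rightarrow> nat) set" where
  "indep_tuples p W j = {t \<in> padded_funcs j W (\<lambda>_. 0). lin_indep p t j}"

lemma finite_indep_tuples: "finite W \<Longrightarrow> finite (indep_tuples p W j)"
  unfolding indep_tuples_def by (simp add: finite_padded_funcs)

lemma indep_tuples_0: "indep_tuples p W 0 = {\<lambda>_ _. 0}"
  by (auto simp: indep_tuples_def padded_funcs_0 lin_indep_def)

lemma fun_upd_in_indep_tuples:
  assumes "prime p" "is_subspace p n W" "t \<in> indep_tuples p W j" "v \<in> W - lspan p t j"
  shows "t(j := v) \<in> indep_tuples p W (Suc j)"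
proof -
  have "\<forall>i. v i < p"
    using assms(2,4) by (auto simp: is_subspace_def Fvecs_def)
  then have "lin_indep p (t(j := v)) (Suc j)"
    using assms(1,3,4) lin_indep_fun_upd by (simp add: indep_tuples_def)
  then show ?thesis
    using assms(3,4) by (auto simp: indep_tuples_def padded_funcs_def less_Suc_eq)
qed

lemma power_pred_le_power_diff:
  fixes p :: nat
  assumes "p \<ge> 2" "j < k"
  shows "p ^ (k - 1) \<le> p ^ k - p ^ j"
proof -
  have "p ^ j \<le> p ^ (k - 1)" and "p ^ k = p * p ^ (k - 1)"
    using assms by (auto intro: power_increasing simp flip: power_Suc)
  then show ?thesis
    using mult_le_mono1[OF assms(1), of "p ^ (k - 1)"] by linarith
qed

lemma card_indep_tuples_Suc:
  assumes "prime p" "is_subspace p n W" "card W = p ^ k" "j < k"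
  shows "card (indep_tuples p W j) * p ^ (k - 1) \<le> card (indep_tuples p W (Suc j))"
proof -
  have p2: "p \<ge> 2"
    using assms(1) prime_ge_2_nat by blast
  then have p0: "p > 0"
    by simp
  have fin: "finite W"
    using finite_subspace[OF p0 assms(2)] .
  let ?T = "indep_tuples p W j"
  let ?E = "SIGMA t:?T. W - lspan p t j"
  have "p ^ (k - 1) \<le> card (W - lspan p t j)" if t: "t \<in> ?T" for t
  proof -
    have "lspan p t j \<subseteq> W"
      using t lspan_subset_subspace[OF p0 assms(2)]
      by (auto simp: indep_tuples_def padded_funcs_def)
    moreover have "card (lspan p t j) = p ^ j"
      using t card_lspan[OF p0] by (simp add: indep_tuples_def)
    ultimately show ?thesis
      using fin assms(3) power_pred_le_power_diff[OF p2 assms(4)]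
      by (simp add: card_Diff_subset finite_subset)
  qed
  then have "card ?T * p ^ (k - 1) \<le> (\<Sum>t\<in>?T. card (W - lspan p t j))"
    using sum_bounded_below[of ?T "p ^ (k - 1)"] by (simp add: mult.commute)
  also have "\<dots> = card ?E"
    using fin finite_indep_tuples by simp
  also have "\<dots> = card ((\<lambda>(t, v). t(j := v)) ` ?E)"
  proof (rule card_image[symmetric], rule inj_onI, clarify)
    fix t v t' v'
    assume "t \<in> ?T" "t' \<in> ?T" and eq: "t(j := v) = t'(j := v')"
    then have "t j = t' j"
      by (simp add: indep_tuples_def padded_funcs_def)
    then have "t i = t' i" for i
      using fun_cong[OF eq, of i] by (cases "i = j") auto
    then show "t = t' \<and> v = v'"
      using fun_cong[OF eq, of j] by auto
  qed
  also have "\<dots> \<le> card (indep_tuples p W (Suc j))"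
    using fun_upd_in_indep_tuples[OF assms(1,2)] fin
    by (intro card_mono finite_indep_tuples) auto
  finally show ?thesis .
qed

lemma card_indep_tuples_ge:
  assumes "prime p" "is_subspace p n W" "card W = p ^ k" "j \<le> k"
  shows "p ^ ((k - 1) * j) \<le> card (indep_tuples p W j)"
  using assms(4)
proof (induction j)
  case 0
  then show ?case
    by (simp add: indep_tuples_0)
next
  case (Suc j)
  have "p ^ ((k - 1) * Suc j) = p ^ ((k - 1) * j) * p ^ (k - 1)"
    by (simp add: power_add)
  also have "\<dots> \<le> card (indep_tuples p W j) * p ^ (k - 1)"
    using Suc by simp
  also have "\<dots> \<le> card (indep_tuples p W (Suc j))"
    using card_indep_tuples_Suc[OF assms(1-3)] Suc.prems by simp
  finally show ?case .
qed

lemma lspan_indep_tuple: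
  assumes "p > 0" "is_subspace p n W" "card W = p ^ k" "t \<in> indep_tuples p W k"
  shows "lspan p t k = W"
proof (rule card_subset_eq)
  show "finite W"
    using finite_subspace[OF assms(1,2)] .
  show "lspan p t k \<subseteq> W"
    using assms lspan_subset_subspace by (auto simp: indep_tuples_def padded_funcs_def)
  show "card (lspan p t k) = card W"
    using assms card_lspan by (simp add: indep_tuples_def)
qed

lemma inj_on_snd_subspace_bases:
  assumes "p > 0"
  shows "inj_on snd (SIGMA W:{W. is_subspace p n W \<and> has_dim p W k}. indep_tuples p W k)"
    (is "inj_on snd ?B")
proof -
  have fst_eq: "fst x = lspan p (snd x) k" if x: "x \<in> ?B" for x
  proof -
    obtain W t where "x = (W, t)" "is_subspace p n W" "has_dim p W k" "t \<in> indep_tuples p W k"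
      using x by auto
    then show ?thesis
      using lspan_indep_tuple[OF assms, of n W k t] card_has_dim[OF assms, of W k] by simp
  qed
  show ?thesis
  proof (rule inj_onI)
    fix x y assume "x \<in> ?B" "y \<in> ?B" "snd x = snd y"
    then show "x = y"
      using fst_eq by (intro prod_eqI) simp_all
  qed
qed

lemma pbinom_upper:
  assumes "prime p" "k \<le> n"
  shows "pbinom p n k \<le> p ^ (k * (n - k) + k)"
proof -
  have p0: "p > 0"
    using assms(1) prime_gt_0_nat by blast
  define S where "S = {W. is_subspace p n W \<and> has_dim p W k}"
  let ?B = "SIGMA W:S. indep_tuples p W k"
  have card_S: "card W = p ^ k" if "W \<in> S" for W
    using that card_has_dim[OF p0] by (simp add: S_def)
  have "p ^ ((k - 1) * k) \<le> card (indep_tuples p W k)" if "W \<in> S" for W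
    using that card_S card_indep_tuples_ge[OF assms(1), of n W k k] by (simp add: S_def)
  then have "card S * p ^ ((k - 1) * k) \<le> (\<Sum>W\<in>S. card (indep_tuples p W k))"
    using sum_bounded_below[of S "p ^ ((k - 1) * k)"] by (simp add: mult.commute)
  also have "\<dots> = card ?B"
    using finite_subspaces[OF p0] finite_indep_tuples finite_subspace[OF p0]
    by (intro card_SigmaI[symmetric]) (auto simp: S_def)
  also have "\<dots> = card (snd ` ?B)"
    using inj_on_snd_subspace_bases[OF p0] unfolding S_def by (rule card_image[symmetric])
  also have "\<dots> \<le> card (padded_funcs k (Fvecs p n) (\<lambda>_. 0))"
    by (intro card_mono finite_padded_funcs finite_Fvecs p0)
      (auto simp: S_def indep_tuples_def padded_funcs_def is_subspace_def)
  also have "\<dots> = p ^ ((k * (n - k) + k) + (k - 1) * k)"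
  proof -
    obtain r where "n = k + r"
      using assms(2) le_Suc_ex by blast
    then have "n * k = (k * (n - k) + k) + (k - 1) * k"
      by (cases k) (simp_all add: algebra_simps)
    then show ?thesis
      by (simp add: card_padded_funcs finite_Fvecs card_Fvecs p0 flip: power_mult)
  qed
  finally show ?thesis
    using p0 unfolding pbinom_def S_def by (simp add: power_add)
qed

section \<open>Echelon forms and the lower bound\<close>

text \<open>Row j of the k x n matrix [I_k | M].\<close>
definition echelon_basis :: "nat \<Rightarrow> nat \<Rightarrow> (nat \<Rightarrow> nat \<Rightarrow> nat) \<Rightarrow> nat \<Rightarrow> nat \<Rightarrow> nat" where
  "echelon_basis k n M j i =
     (if i < k then (if i = j then 1 else 0) else if i < n then M j (i - k) else 0)"

lemma echelon_basis_in_Fvecs: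
  assumes "k \<le> n" "p > 1" "M \<in> padded_funcs k (Fvecs p (n - k)) (\<lambda>_. 0)" "j < k"
  shows "echelon_basis k n M j \<in> Fvecs p n"
  using assms unfolding echelon_basis_def Fvecs_def padded_funcs_def by auto

lemma lincomb_echelon_basis: "i < k \<Longrightarrow> lincomb p c (echelon_basis k n M) k i = c i mod p"
proof -
  assume i: "i < k"
  have "(\<Sum>l<k. c l * echelon_basis k n M l i) = (\<Sum>l<k. if l = i then c l else 0)"
    by (rule sum.cong) (auto simp: echelon_basis_def i)
  then show ?thesis
    using i by (simp add: lincomb_def)
qed

lemma lin_indep_echelon_basis: "lin_indep p (echelon_basis k n M) k"
  unfolding lin_indep_def
proof (rule allI, intro impI allI)
  fix c l
  assume c: "\<forall>j<k. c j < p" and zero: "lincomb p c (echelon_basis k n M) k = (\<lambda>_. 0)" and l: "l < k"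
  have "c l mod p = 0"
    using fun_cong[OF zero, of l] lincomb_echelon_basis[OF l] by simp
  then show "c l = 0"
    using c l by simp
qed

lemma echelon_span_subspace:
  assumes "p > 1" "k \<le> n" "M \<in> padded_funcs k (Fvecs p (n - k)) (\<lambda>_. 0)"
  shows "is_subspace p n (lspan p (echelon_basis k n M) k)"
    and "has_dim p (lspan p (echelon_basis k n M) k) k"
proof -
  have basis: "\<And>j. j < k \<Longrightarrow> echelon_basis k n M j \<in> Fvecs p n"
    using echelon_basis_in_Fvecs[OF assms(2,1,3)] .
  then show "is_subspace p n (lspan p (echelon_basis k n M) k)"
    using assms(1) by (intro is_subspace_lspan) simp_all
  have "echelon_basis k n M j \<in> lspan p (echelon_basis k n M) k" if "j < k" for j
    using unit_in_lspan[of p j k "echelon_basis k n M" n] assms(1) that basis by blast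
  then show "has_dim p (lspan p (echelon_basis k n M) k) k"
    unfolding has_dim_iff using lin_indep_echelon_basis by blast
qed

lemma echelon_basis_eq_if_lspan_eq:
  assumes "p > 1" "k \<le> n"
    and M: "M \<in> padded_funcs k (Fvecs p (n - k)) (\<lambda>_. 0)"
    and M': "M' \<in> padded_funcs k (Fvecs p (n - k)) (\<lambda>_. 0)"
    and eq: "lspan p (echelon_basis k n M) k = lspan p (echelon_basis k n M') k"
    and j: "j < k"
  shows "echelon_basis k n M j = echelon_basis k n M' j"
proof -
  have basis: "\<And>j. j < k \<Longrightarrow> echelon_basis k n M j \<in> Fvecs p n"
    and basis': "\<And>j. j < k \<Longrightarrow> echelon_basis k n M' j \<in> Fvecs p n"
    using echelon_basis_in_Fvecs[OF assms(2,1)] M M' by blast+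
  have "echelon_basis k n M j \<in> lspan p (echelon_basis k n M') k"
    using unit_in_lspan[of p j k "echelon_basis k n M" n] assms(1) j basis eq by simp
  then obtain c where c: "\<forall>l<k. c l < p"
    and row: "echelon_basis k n M j = lincomb p c (echelon_basis k n M') k"
    unfolding lspan_def by blast
  have "c l = (if l = j then 1 else 0)" if l: "l < k" for l
  proof -
    have "(if l = j then 1 else 0) = c l mod p"
      using fun_cong[OF row, of l] lincomb_echelon_basis[OF l] l by (simp add: echelon_basis_def)
    then show ?thesis
      using c l by simp
  qed
  then have "lincomb p c (echelon_basis k n M') k
      = lincomb p (\<lambda>l. if l = j then 1 else 0) (echelon_basis k n M') k"
    by (intro lincomb_cong_mod) simp
  also have "\<dots> = echelon_basis k n M' j"
    using lincomb_unit[OF j basis'] .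
  finally show ?thesis
    using row by simp
qed

lemma inj_on_echelon_span:
  assumes "p > 1" "k \<le> n"
  shows "inj_on (\<lambda>M. lspan p (echelon_basis k n M) k) (padded_funcs k (Fvecs p (n - k)) (\<lambda>_. 0))"
proof (rule inj_onI)
  fix M M'
  assume M: "M \<in> padded_funcs k (Fvecs p (n - k)) (\<lambda>_. 0)"
    and M': "M' \<in> padded_funcs k (Fvecs p (n - k)) (\<lambda>_. 0)"
    and eq: "lspan p (echelon_basis k n M) k = lspan p (echelon_basis k n M') k"
  show "M = M'"
  proof (intro ext)
    fix j l
    show "M j l = M' j l"
    proof (cases "j < k \<and> l < n - k")
      case True
      then have "k + l < n"
        by linarith
      then show ?thesis
        using True echelon_basis_eq_if_lspan_eq[OF assms M M' eq, of j]
        by (auto dest: fun_cong[of _ _ "k + l"] simp: echelon_basis_def)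
    next
      case outside: False
      show ?thesis
      proof (cases "j < k")
        case True
        then have "M j \<in> Fvecs p (n - k)" "M' j \<in> Fvecs p (n - k)" "n - k \<le> l"
          using M M' outside by (simp_all add: padded_funcs_def)
        then show ?thesis
          by (simp add: Fvecs_def)
      next
        case False
        then show ?thesis
          using M M' by (simp add: padded_funcs_def)
      qed
    qed
  qed
qed

lemma pbinom_lower:
  assumes "prime p" "k \<le> n"
  shows "p ^ (k * (n - k)) \<le> pbinom p n k"
proof -
  have p1: "p > 1"
    using assms(1) prime_gt_1_nat by blast
  let ?Ms = "padded_funcs k (Fvecs p (n - k)) (\<lambda>_. 0)"
  have "p ^ (k * (n - k)) = card ?Ms"
    using p1 by (simp add: card_padded_funcs finite_Fvecs card_Fvecs flip: power_mult)
  also have "\<dots> = card ((\<lambda>M. lspan p (echelon_basis k n M) k) ` ?Ms)"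
    using card_image[OF inj_on_echelon_span[OF p1 assms(2)]] by simp
  also have "\<dots> \<le> pbinom p n k"
    unfolding pbinom_def using p1 echelon_span_subspace[OF p1 assms(2)]
    by (intro card_mono finite_subspaces) auto
  finally show ?thesis .
qed

lemma pbinom_factor_bounds:
  fixes p a b l :: nat
  assumes "prime p" "a \<le> b" "b \<le> l"
  shows "p ^ (b * (l - b)) \<le> p ^ (a * (l - b)) * pbinom p (l - a) (b - a)"
    and "p ^ (a * (l - b)) * pbinom p (l - a) (b - a) \<le> p ^ (b * (l - b)) * p ^ (b - a)"
proof -
  have dims: "b - a \<le> l - a" "l - a - (b - a) = l - b"
    using assms(2,3) by simp_all
  have split: "p ^ (b * (l - b)) = p ^ (a * (l - b)) * p ^ ((b - a) * (l - b))"
    using assms(2) by (simp flip: power_add add: diff_mult_distrib)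
  show "p ^ (b * (l - b)) \<le> p ^ (a * (l - b)) * pbinom p (l - a) (b - a)"
    unfolding split using pbinom_lower[OF assms(1) dims(1)] unfolding dims(2)
    by (rule mult_le_mono2)
  have "p ^ (a * (l - b)) * pbinom p (l - a) (b - a)
      \<le> p ^ (a * (l - b)) * p ^ ((b - a) * (l - b) + (b - a))"
    using pbinom_upper[OF assms(1) dims(1)] unfolding dims(2) by (rule mult_le_mono2)
  then show "p ^ (a * (l - b)) * pbinom p (l - a) (b - a) \<le> p ^ (b * (l - b)) * p ^ (b - a)"
    unfolding split by (simp only: power_add mult.assoc)
qed

lemma sum_diff_Suc_telescope:
  fixes f :: "nat \<Rightarrow> nat"
  assumes "\<And>i. i \<ge> 1 \<Longrightarrow> f (Suc i) \<le> f i"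
  shows "(\<Sum>i=1..N. f i - f (Suc i)) + f (Suc N) = f 1"
proof (induction N)
  case (Suc N)
  then show ?case
    using assms[of "Suc N"] by simp
qed simp

theorem proposition6p3:
  fixes p :: nat and lam nu :: "nat \<Rightarrow> nat" and N :: nat
  assumes "prime p"
    and "\<And>i. i \<ge> 1 \<Longrightarrow> lam (Suc i) \<le> lam i"
    and "\<And>i. i \<ge> 1 \<Longrightarrow> nu (Suc i) \<le> nu i"
    and "\<And>i. i \<ge> 1 \<Longrightarrow> nu i \<le> lam i"
    and "\<And>i. i > N \<Longrightarrow> lam i = 0"
  shows "(\<Prod>i=1..N. p ^ (nu i * (lam i - nu i)))
           \<le> (\<Prod>i=1..N. p ^ (nu (Suc i) * (lam i - nu i)) * pbinom p (lam i - nu (Suc i)) (nu i - nu (Suc i)))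
       \<and> (\<Prod>i=1..N. p ^ (nu (Suc i) * (lam i - nu i)) * pbinom p (lam i - nu (Suc i)) (nu i - nu (Suc i)))
           \<le> p ^ (nu 1) * (\<Prod>i=1..N. p ^ (nu i * (lam i - nu i)))"
proof -
  define f where "f i = p ^ (nu i * (lam i - nu i))" for i
  define g where
    "g i = p ^ (nu (Suc i) * (lam i - nu i)) * pbinom p (lam i - nu (Suc i)) (nu i - nu (Suc i))" for i
  have f_le_g: "f i \<le> g i" and g_le_f: "g i \<le> f i * p ^ (nu i - nu (Suc i))" if "i \<in> {1..N}" for i
    using pbinom_factor_bounds[OF assms(1) assms(3,4)[of i]] that unfolding f_def g_def by auto
  have lower: "(\<Prod>i=1..N. f i) \<le> (\<Prod>i=1..N. g i)"
    using f_le_g by (intro prod_mono) auto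
  have "(\<Prod>i=1..N. g i) \<le> (\<Prod>i=1..N. f i * p ^ (nu i - nu (Suc i)))"
    using g_le_f by (intro prod_mono) auto
  also have "\<dots> = (\<Prod>i=1..N. f i) * p ^ (\<Sum>i=1..N. nu i - nu (Suc i))"
    by (simp only: prod.distrib power_sum)
  also have "\<dots> \<le> p ^ (nu 1) * (\<Prod>i=1..N. f i)"
  proof -
    have "(\<Sum>i=1..N. nu i - nu (Suc i)) \<le> nu 1"
      using sum_diff_Suc_telescope[of nu N, OF assms(3)] by linarith
    then have "p ^ (\<Sum>i=1..N. nu i - nu (Suc i)) \<le> p ^ (nu 1)"
      using prime_gt_0_nat[OF assms(1)] by (intro power_increasing) simp_all
    then show ?thesis
      unfolding mult.commute[of "\<Prod>i=1..N. f i"] by (rule mult_le_mono1)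
  qed
  finally have upper: "(\<Prod>i=1..N. g i) \<le> p ^ (nu 1) * (\<Prod>i=1..N. f i)" .
  show ?thesis
    using lower[unfolded f_def g_def] upper[unfolded f_def g_def] by (rule conjI)
qed

end
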